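(* Let $C\subseteq 2^X$ be an isometric concept class and let $(c_1,\dots,c_m)$ be an ordering of all concepts of $C$; write $C_i=\{c_1,\dots,c_i\}$ for $1\le i\le m$. The following are equivalent: (1) every $C_i$ is ample; (2) for every $i$, $c_i$ is a corner of $C_i$; (3) every $C_i$ is isometric; (4) every $C_i$ is weakly isometric.
   Context: $X$ is a finite set; a concept class is $C\subseteq 2^X$. $C|Y=\{c\cap Y:c\in C\}$; $Y$ is shattered by $C$ if $C|Y=2^Y$. A cube of $2^X$ is $B=\{T\cup Z:Z\subseteq Y\}$ with $Y\subseteq X$, $T\subseteq X\setminus Y$; $Y$ is its support; a cube of $C$ is a cube $B\subseteq C$. $C$ is ample if every set shattered by $C$ is the support of a cube of $C$. A concept $c\in C$ is a corner of $C$ if it lies in exactly one inclusion-maximal cube of $C$. $G(C)$ is the graph on $C$ joining $c,c'$ when $|c\Delta c'|=1$; $d(c,c')=|c\Delta c'|$ is the Hamming distance. $C$ is isometric if $G(C)$ is connected and the graph distance in $G(C)$ equals $d(c,c')$ for all $c,c'\in C$; $C$ is weakly isometric if $G(C)$ is connected and the graph distance equals $d(c,c')$ for all $c,c'\in C$ with $d(c,c')\le 2$. *)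

theory Defs
  imports Main
begin

definition restrict_class :: "'a set set \<Rightarrow> 'a set \<Rightarrow> 'a set set" where
  "restrict_class C Y = {c \<inter> Y | c. c \<in> C}"

definition shattered :: "'a set set \<Rightarrow> 'a set \<Rightarrow> bool" where
  "shattered C Y \<longleftrightarrow> restrict_class C Y = Pow Y"

definition cube :: "'a set \<Rightarrow> 'a set \<Rightarrow> 'a set set" where
  "cube T Y = {T \<union> Z | Z. Z \<subseteq> Y}"

definition is_cube :: "'a set \<Rightarrow> 'a set set \<Rightarrow> bool" where
  "is_cube X B \<longleftrightarrow> (\<exists>Y T. Y \<subseteq> X \<and> T \<subseteq> X - Y \<and> B = cube T Y)"

definition ample :: "'a set \<Rightarrow> 'a set set \<Rightarrow> bool" where
  "ample X C \<longleftrightarrow> (\<forall>Y. Y \<subseteq> X \<longrightarrow> shattered C Y \<longrightarrow>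
      (\<exists>T. T \<subseteq> X - Y \<and> cube T Y \<subseteq> C))"

definition maximal_cube :: "'a set \<Rightarrow> 'a set set \<Rightarrow> 'a set set \<Rightarrow> bool" where
  "maximal_cube X C B \<longleftrightarrow> is_cube X B \<and> B \<subseteq> C \<and>
      \<not> (\<exists>B'. is_cube X B' \<and> B' \<subseteq> C \<and> B \<subset> B')"

definition corner :: "'a set \<Rightarrow> 'a set set \<Rightarrow> 'a set \<Rightarrow> bool" where
  "corner X C c \<longleftrightarrow> c \<in> C \<and> (\<exists>!B. maximal_cube X C B \<and> c \<in> B)"

definition symdiff :: "'a set \<Rightarrow> 'a set \<Rightarrow> 'a set" where
  "symdiff a b = (a - b) \<union> (b - a)"

definition hdist :: "'a set \<Rightarrow> 'a set \<Rightarrow> nat" where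
  "hdist a b = card (symdiff a b)"

definition adj :: "'a set set \<Rightarrow> 'a set \<Rightarrow> 'a set \<Rightarrow> bool" where
  "adj C a b \<longleftrightarrow> a \<in> C \<and> b \<in> C \<and> hdist a b = 1"

text \<open>A walk in G(C) given as a nonempty list of vertices; its length is length p - 1.\<close>
definition walk :: "'a set set \<Rightarrow> 'a set list \<Rightarrow> 'a set \<Rightarrow> 'a set \<Rightarrow> bool" where
  "walk C p a b \<longleftrightarrow> p \<noteq> [] \<and> hd p = a \<and> last p = b \<and> set p \<subseteq> C \<and>
      (\<forall>i. Suc i < length p \<longrightarrow> adj C (p ! i) (p ! Suc i))"

definition connected_class :: "'a set set \<Rightarrow> bool" where
  "connected_class C \<longleftrightarrow> (\<forall>a\<in>C. \<forall>b\<in>C. \<exists>p. walk C p a b)"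

definition gdist :: "'a set set \<Rightarrow> 'a set \<Rightarrow> 'a set \<Rightarrow> nat" where
  "gdist C a b = (LEAST n. \<exists>p. walk C p a b \<and> length p = Suc n)"

definition isometric :: "'a set set \<Rightarrow> bool" where
  "isometric C \<longleftrightarrow> connected_class C \<and> (\<forall>a\<in>C. \<forall>b\<in>C. gdist C a b = hdist a b)"

definition weakly_isometric :: "'a set set \<Rightarrow> bool" where
  "weakly_isometric C \<longleftrightarrow> connected_class C \<and>
     (\<forall>a\<in>C. \<forall>b\<in>C. hdist a b \<le> 2 \<longrightarrow> gdist C a b = hdist a b)"

end

theory Submission
  imports Defs
begin

text \<open>Going up: if \<open>D\<close> is ample and \<open>c \<notin> D\<close>, then \<open>D \<union> {c}\<close> contains the whole cube spanned
  at \<open>c\<close> by the directions in which \<open>c\<close> has a neighbour in \<open>D\<close>, because faces of ample classes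
  are ample while a cube missing two antipodal vertices is not. So \<open>c\<close> is a corner of
  \<open>D \<union> {c}\<close>; and if \<open>D \<union> {c}\<close> is isometric, every set it shatters but \<open>D\<close> does not consists
  of such directions (read off from first steps of geodesics leaving \<open>c\<close>), so \<open>D \<union> {c}\<close> is
  ample. Going down: removing \<open>c\<close> from an isometric class keeps it isometric as soon as any two
  neighbours of \<open>c\<close> at distance two have another common neighbour, which is the case when \<open>c\<close>
  is a corner and when the smaller class is weakly isometric.\<close>

section \<open>Hamming distance\<close>

lemma symdiff_commute: "symdiff a b = symdiff b a"
  by (auto simp: symdiff_def)

lemma symdiff_self [simp]: "symdiff a a = {}"
  by (simp add: symdiff_def)

lemma symdiff_symdiff [simp]: "symdiff a (symdiff a S) = S"
  by (auto simp: symdiff_def)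

lemma symdiff_eq_iff: "symdiff c x = R \<longleftrightarrow> x = symdiff c R"
  by (auto simp: symdiff_def)

lemma symdiff_empty [simp]: "symdiff c {} = c"
  by (simp add: symdiff_def)

lemma symdiff_subset_Un: "symdiff a c \<subseteq> symdiff a b \<union> symdiff b c"
  by (auto simp: symdiff_def)

lemma hdist_commute: "hdist a b = hdist b a"
  by (simp add: hdist_def symdiff_commute)

lemma hdist_self [simp]: "hdist a a = 0"
  by (simp add: hdist_def)

lemma hdist_flip [simp]: "hdist a (symdiff a {e}) = 1"
  by (simp add: hdist_def)

lemma hdist_eq_1_iff: "hdist a b = 1 \<longleftrightarrow> (\<exists>e. b = symdiff a {e})"
proof
  assume "hdist a b = 1"
  then obtain e where "symdiff a b = {e}"
    by (auto simp: hdist_def card_1_singleton_iff)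
  then have "b = symdiff a {e}"
    by (auto simp: symdiff_def)
  then show "\<exists>e. b = symdiff a {e}" ..
qed auto

text \<open>Only one of the two differences needs to be finite: if \<open>symdiff b c\<close> is infinite,
  then so is \<open>symdiff a c\<close>, whose junk cardinality is \<open>0\<close>.\<close>
lemma hdist_triangle:
  assumes "finite (symdiff a b)"
  shows "hdist a c \<le> hdist a b + hdist b c"
proof (cases "finite (symdiff b c)")
  case True
  then have "card (symdiff a c) \<le> card (symdiff a b \<union> symdiff b c)"
    using assms by (intro card_mono symdiff_subset_Un) auto
  also have "\<dots> \<le> card (symdiff a b) + card (symdiff b c)"
    by (rule card_Un_le)
  finally show ?thesis
    by (simp add: hdist_def)
next
  case False
  have "symdiff b c \<subseteq> symdiff b a \<union> symdiff a c"
    by (rule symdiff_subset_Un)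
  then have "infinite (symdiff a c)"
    using assms False by (metis finite_Un finite_subset symdiff_commute)
  then show ?thesis
    by (simp add: hdist_def)
qed

lemma finite_symdiff_if_hdist_pos: "0 < hdist a b \<Longrightarrow> finite (symdiff a b)"
  by (simp add: hdist_def card_ge_0_finite)

lemma hdist_le_Suc_if_hdist_eq_1: "hdist a b = 1 \<Longrightarrow> hdist a c \<le> Suc (hdist b c)"
  using hdist_triangle[of a b c] finite_symdiff_if_hdist_pos[of a b] by simp

lemma mem_symdiff_if_flip_closer:
  assumes "hdist (symdiff a {e}) b < hdist a b"
  shows "e \<in> symdiff a b"
proof (rule ccontr)
  assume "e \<notin> symdiff a b"
  then have "symdiff (symdiff a {e}) b = insert e (symdiff a b)"
    by (auto simp: symdiff_def)
  then show False
    using assms finite_symdiff_if_hdist_pos[of a b] \<open>e \<notin> symdiff a b\<close>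
    by (simp add: hdist_def)
qed

section \<open>Walks and isometry\<close>

lemma walk_singleton_iff: "walk C [x] a b \<longleftrightarrow> x = a \<and> x = b \<and> x \<in> C"
  by (auto simp: walk_def)

lemma walk_Cons_Cons_iff:
  "walk C (x # y # p) a b \<longleftrightarrow> x = a \<and> adj C x y \<and> walk C (y # p) y b"
proof -
  have steps: "(\<forall>i. Suc i < length (x # y # p) \<longrightarrow> Q i) \<longleftrightarrow>
      Q 0 \<and> (\<forall>i. Suc i < length (y # p) \<longrightarrow> Q (Suc i))" for Q
    by (auto simp: less_Suc_eq_0_disj)
  show ?thesis
    unfolding walk_def steps by (auto simp: adj_def)
qed

lemma walk_Cons:
  assumes "adj C a y" and "walk C q y b"
  shows "walk C (a # q) a b"
proof -
  obtain r where "q = y # r"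
    using assms(2) by (cases q) (auto simp: walk_def)
  then show ?thesis
    using assms by (simp add: walk_Cons_Cons_iff)
qed

lemma hdist_less_length_if_walk: "walk C p a b \<Longrightarrow> hdist a b < length p"
proof (induction p arbitrary: a)
  case Nil
  then show ?case by (simp add: walk_def)
next
  case (Cons x p)
  show ?case
  proof (cases p)
    case Nil
    then show ?thesis using Cons.prems by (auto simp: walk_singleton_iff)
  next
    case (Cons y r)
    then have "adj C a y" and "walk C p y b"
      using Cons.prems by (auto simp: walk_Cons_Cons_iff)
    then show ?thesis
      using Cons.IH hdist_le_Suc_if_hdist_eq_1[of a y b] by (fastforce simp: adj_def)
  qed
qed

lemma walk_of_length_gdist:
  assumes "walk C p a b"
  shows "\<exists>q. walk C q a b \<and> length q = Suc (gdist C a b)"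
proof -
  have "\<exists>n q. walk C q a b \<and> length q = Suc n"
    using assms by (intro exI[of _ "length p - 1"] exI[of _ p]) (auto simp: walk_def)
  then show ?thesis
    unfolding gdist_def by (rule LeastI_ex)
qed

lemma geodesic_if_isometric:
  assumes "isometric C" "a \<in> C" "b \<in> C"
  shows "\<exists>p. walk C p a b \<and> length p = Suc (hdist a b)"
proof -
  obtain p where "walk C p a b"
    using assms unfolding isometric_def connected_class_def by blast
  then show ?thesis
    using walk_of_length_gdist assms by (fastforce simp: isometric_def)
qed

lemma isometric_if_geodesics:
  assumes geodesic: "\<And>a b. a \<in> C \<Longrightarrow> b \<in> C \<Longrightarrow> \<exists>p. walk C p a b \<and> length p = Suc (hdist a b)"
  shows "isometric C"
  unfolding isometric_def connected_class_def
proof (intro conjI ballI)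
  fix a b assume "a \<in> C" "b \<in> C"
  then obtain p where p: "walk C p a b" "length p = Suc (hdist a b)"
    using geodesic by blast
  then show "\<exists>p. walk C p a b"
    by blast
  have "gdist C a b \<le> hdist a b"
    unfolding gdist_def using p by (intro Least_le) blast
  moreover obtain q where "walk C q a b" "length q = Suc (gdist C a b)"
    using walk_of_length_gdist p(1) by blast
  then have "hdist a b \<le> gdist C a b"
    using hdist_less_length_if_walk by fastforce
  ultimately show "gdist C a b = hdist a b"
    by simp
qed

lemma isometric_iff_steps_towards:
  "isometric C \<longleftrightarrow>
    (\<forall>a\<in>C. \<forall>b\<in>C. a \<noteq> b \<longrightarrow> (\<exists>z\<in>C. hdist a z = 1 \<and> Suc (hdist z b) = hdist a b))"
  (is "_ \<longleftrightarrow> ?steps")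
proof
  assume iso: "isometric C"
  show ?steps
  proof (intro ballI impI)
    fix a b assume "a \<in> C" "b \<in> C" "a \<noteq> b"
    then obtain q where q: "walk C q a b" "length q = Suc (hdist a b)"
      using geodesic_if_isometric[OF iso] by blast
    then obtain z r where "q = a # z # r"
      using \<open>a \<noteq> b\<close> by (cases q rule: remdups_adj.cases) (auto simp: walk_def)
    then have "adj C a z" "walk C (z # r) z b"
      using q(1) by (auto simp: walk_Cons_Cons_iff)
    then show "\<exists>z\<in>C. hdist a z = 1 \<and> Suc (hdist z b) = hdist a b"
      using hdist_less_length_if_walk[of C "z # r" z b] hdist_le_Suc_if_hdist_eq_1[of a z b]
        q(2) \<open>q = a # z # r\<close> by (intro bexI[of _ z]) (auto simp: adj_def)
  qed
next
  assume steps: ?steps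
  show "isometric C"
  proof (rule isometric_if_geodesics)
    fix a b assume "a \<in> C" "b \<in> C"
    then show "\<exists>p. walk C p a b \<and> length p = Suc (hdist a b)"
    proof (induction "hdist a b" arbitrary: a)
      case 0
      then have "a = b"
        using steps by fastforce
      then show ?case
        using 0 by (intro exI[of _ "[a]"]) (simp add: walk_singleton_iff)
    next
      case (Suc n)
      then obtain z where z: "z \<in> C" "hdist a z = 1" "hdist z b = n"
        using steps by (metis Suc_inject hdist_self nat.distinct(1))
      then obtain p where "walk C p z b" "length p = Suc n"
        using Suc by metis
      then show ?case
        using Suc z by (intro exI[of _ "a # p"]) (auto simp: adj_def intro: walk_Cons)
    qed
  qed
qed

lemma isometric_empty: "isometric {}"
  by (simp add: isometric_def connected_class_def)

lemma weakly_isometric_if_isometric: "isometric C \<Longrightarrow> weakly_isometric C"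
  by (simp add: isometric_def weakly_isometric_def)

lemma weakly_isometric_common_neighbour:
  assumes "weakly_isometric C" "u \<in> C" "w \<in> C" "hdist u w = 2"
  shows "\<exists>z\<in>C. hdist u z = 1 \<and> hdist z w = 1"
proof -
  obtain p where "walk C p u w"
    using assms unfolding weakly_isometric_def connected_class_def by blast
  moreover have "gdist C u w = 2"
    using assms by (auto simp: weakly_isometric_def)
  ultimately obtain q where q: "walk C q u w" "length q = 3"
    using walk_of_length_gdist by fastforce
  then obtain x z y where "q = [x, z, y]"
    by (auto simp: numeral_3_eq_3 length_Suc_conv)
  with q show ?thesis
    by (auto simp: walk_Cons_Cons_iff walk_singleton_iff adj_def)
qed

text \<open>A geodesic passing through \<open>c\<close> is rerouted through a common neighbour of the two
  neighbours of \<open>c\<close> on it.\<close>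
lemma isometric_Diff_singleton_if_detours:
  assumes iso: "isometric E"
    and detour: "\<And>u w. u \<in> E - {c} \<Longrightarrow> w \<in> E - {c} \<Longrightarrow> hdist c u = 1 \<Longrightarrow> hdist c w = 1 \<Longrightarrow>
      hdist u w = 2 \<Longrightarrow> \<exists>z\<in>E - {c}. hdist u z = 1 \<and> hdist z w = 1"
  shows "isometric (E - {c})"
  unfolding isometric_iff_steps_towards
proof (intro ballI impI)
  fix a b assume a: "a \<in> E - {c}" and b: "b \<in> E - {c}" and "a \<noteq> b"
  then obtain y where y: "y \<in> E" "hdist a y = 1" "Suc (hdist y b) = hdist a b"
    using iso unfolding isometric_iff_steps_towards by blast
  show "\<exists>z\<in>E - {c}. hdist a z = 1 \<and> Suc (hdist z b) = hdist a b"
  proof (cases "y = c")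
    case False
    then show ?thesis using y by blast
  next
    case True
    then obtain z0 where z0: "z0 \<in> E" "hdist c z0 = 1" "Suc (hdist z0 b) = hdist c b"
      using iso y b unfolding isometric_iff_steps_towards by blast
    have "z0 \<noteq> c"
      using z0(2) by auto
    have "finite (symdiff a z0)"
      using symdiff_subset_Un[of a z0 c] finite_symdiff_if_hdist_pos[of a c]
        finite_symdiff_if_hdist_pos[of c z0] y(2) z0(2) True
      by (simp add: finite_subset)
    then have "hdist a b \<le> hdist a z0 + hdist z0 b"
      by (rule hdist_triangle)
    moreover have "hdist a z0 \<le> 2"
      using hdist_le_Suc_if_hdist_eq_1[of a c z0] y(2) z0(2) True by simp
    ultimately have "hdist a z0 = 2"
      using y(3) z0(3) True by simp
    moreover have "hdist c a = 1"
      using y(2) True by (simp add: hdist_commute)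
    ultimately obtain z where z: "z \<in> E - {c}" "hdist a z = 1" "hdist z z0 = 1"
      using detour[of a z0] a z0 \<open>z0 \<noteq> c\<close> by blast
    have "Suc (hdist z b) = hdist a b"
      using hdist_le_Suc_if_hdist_eq_1[of z z0 b] hdist_le_Suc_if_hdist_eq_1[of a z b]
        z y(3) z0(3) True by simp
    then show ?thesis
      using z by blast
  qed
qed

lemma isometric_Diff_singleton_if_weakly_isometric:
  assumes "isometric E" and "weakly_isometric (E - {c})"
  shows "isometric (E - {c})"
  using assms(1) weakly_isometric_common_neighbour[OF assms(2)]
  by (rule isometric_Diff_singleton_if_detours)

section \<open>Cubes and corners\<close>

lemma mem_cube_iff: "x \<in> cube T Y \<longleftrightarrow> T \<subseteq> x \<and> x \<subseteq> T \<union> Y"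
proof
  assume "T \<subseteq> x \<and> x \<subseteq> T \<union> Y"
  then have "x = T \<union> (x - T)" "x - T \<subseteq> Y"
    by auto
  then show "x \<in> cube T Y"
    unfolding cube_def by blast
qed (auto simp: cube_def)

lemma mem_cube_Diff_iff: "x \<in> cube (c - S) S \<longleftrightarrow> symdiff c x \<subseteq> S"
  by (auto simp: mem_cube_iff symdiff_def)

lemma cube_Diff_singleton: "cube (c - {e}) {e} = {c, symdiff c {e}}"
  by (auto simp: mem_cube_Diff_iff subset_singleton_iff symdiff_eq_iff)

lemma is_cube_cube_Diff: "c \<subseteq> X \<Longrightarrow> S \<subseteq> X \<Longrightarrow> is_cube X (cube (c - S) S)"
  unfolding is_cube_def by (intro exI[of _ S] exI[of _ "c - S"]) auto

lemma cube_Diff_if_is_cube: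
  assumes "is_cube X B" and "c \<in> B"
  shows "\<exists>S\<subseteq>X. B = cube (c - S) S"
proof -
  obtain S T where S: "S \<subseteq> X" "T \<subseteq> X - S" "B = cube T S"
    using assms(1) unfolding is_cube_def by blast
  then have "T = c - S"
    using assms(2) by (auto simp: cube_def)
  then show ?thesis
    using S by blast
qed

lemma maximal_cube_exists:
  assumes "finite E" and "is_cube X B" and "B \<subseteq> E"
  shows "\<exists>B'. maximal_cube X E B' \<and> B \<subseteq> B'"
proof -
  let ?cubes = "{B'. is_cube X B' \<and> B' \<subseteq> E}"
  have "finite ?cubes"
    by (rule finite_subset[of _ "Pow E"]) (use assms(1) in auto)
  moreover have "B \<in> ?cubes"
    using assms(2,3) by simp
  ultimately obtain M where M: "M \<in> ?cubes" "B \<subseteq> M"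
    and max: "\<forall>B'\<in>?cubes. M \<subseteq> B' \<longrightarrow> M = B'"
    by (blast dest: finite_has_maximal2)
  have "maximal_cube X E M"
    unfolding maximal_cube_def using M(1) max by blast
  with M(2) show ?thesis
    by blast
qed

lemma corner_if_greatest_cube:
  assumes "is_cube X B" "B \<subseteq> E" "c \<in> B"
    and greatest: "\<And>B'. is_cube X B' \<Longrightarrow> B' \<subseteq> E \<Longrightarrow> c \<in> B' \<Longrightarrow> B' \<subseteq> B"
  shows "corner X E c"
proof -
  have "maximal_cube X E B"
    unfolding maximal_cube_def using assms by blast
  moreover have "B' = B" if "maximal_cube X E B'" "c \<in> B'" for B'
    using that assms unfolding maximal_cube_def by blast
  ultimately show ?thesis
    unfolding corner_def using assms(2,3) by blast
qed

lemma flip_in_maximal_cube_at_corner: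
  assumes "finite E" "E \<subseteq> Pow X" "corner X E c"
    and B: "maximal_cube X E B" "c \<in> B" and flip: "symdiff c {e} \<in> E"
  shows "symdiff c {e} \<in> B"
proof -
  have "c \<in> E" "c \<subseteq> X"
    using assms(2,3) by (auto simp: corner_def)
  then have "e \<in> X"
    using flip assms(2) by (auto simp: symdiff_def)
  then have "is_cube X (cube (c - {e}) {e})"
    using \<open>c \<subseteq> X\<close> by (intro is_cube_cube_Diff) auto
  moreover have "cube (c - {e}) {e} \<subseteq> E"
    using flip \<open>c \<in> E\<close> by (simp add: cube_Diff_singleton)
  ultimately obtain B' where B': "maximal_cube X E B'" "cube (c - {e}) {e} \<subseteq> B'"
    using maximal_cube_exists[OF assms(1)] by blast
  moreover have "c \<in> B'"
    using B'(2) by (simp add: cube_Diff_singleton)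
  ultimately have "B' = B"
    using assms(3) B unfolding corner_def by blast
  then show ?thesis
    using B'(2) by (simp add: cube_Diff_singleton)
qed

text \<open>The unique maximal cube at a corner \<open>c\<close> contains every edge at \<open>c\<close>, hence the square
  spanned by any two of them.\<close>
lemma corner_common_neighbour:
  assumes "finite E" "E \<subseteq> Pow X" "corner X E c"
    and u: "u \<in> E - {c}" "hdist c u = 1" and w: "w \<in> E - {c}" "hdist c w = 1"
    and "hdist u w = 2"
  shows "\<exists>z\<in>E - {c}. hdist u z = 1 \<and> hdist z w = 1"
proof -
  obtain B where B: "maximal_cube X E B" "c \<in> B"
    using assms(3) unfolding corner_def by blast
  obtain S where B_eq: "B = cube (c - S) S"
    using B cube_Diff_if_is_cube unfolding maximal_cube_def by blast
  have flip_in_S: "e \<in> S" if "symdiff c {e} \<in> E" for e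
    using flip_in_maximal_cube_at_corner[OF assms(1-3) B that] by (simp add: B_eq mem_cube_Diff_iff)
  obtain e f where e: "u = symdiff c {e}" and f: "w = symdiff c {f}"
    using u(2) w(2) unfolding hdist_eq_1_iff by blast
  have "e \<noteq> f"
    using e f \<open>hdist u w = 2\<close> by auto
  define z where "z = symdiff u {f}"
  have "symdiff c z = {e, f}"
    unfolding z_def e using \<open>e \<noteq> f\<close> by (auto simp: symdiff_def)
  moreover have "{e, f} \<subseteq> S"
    using flip_in_S e f u w by blast
  ultimately have "z \<in> B"
    by (simp add: B_eq mem_cube_Diff_iff)
  then have "z \<in> E - {c}"
    using B(1) \<open>symdiff c z = {e, f}\<close> unfolding maximal_cube_def by auto
  moreover have "z = symdiff w {e}"
    unfolding z_def e f by (auto simp: symdiff_def)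
  ultimately show ?thesis
    using hdist_flip[of u f] hdist_flip[of w e] by (auto simp: z_def hdist_commute)
qed

lemma isometric_Diff_corner:
  assumes "finite E" "E \<subseteq> Pow X" "isometric E" "corner X E c"
  shows "isometric (E - {c})"
  using assms(3) corner_common_neighbour[OF assms(1,2,4)]
  by (rule isometric_Diff_singleton_if_detours)

section \<open>Ample classes\<close>

lemma shattered_iff: "shattered C Y \<longleftrightarrow> (\<forall>P\<subseteq>Y. \<exists>x\<in>C. x \<inter> Y = P)"
proof -
  have "restrict_class C Y \<subseteq> Pow Y"
    by (auto simp: restrict_class_def)
  then have "shattered C Y \<longleftrightarrow> Pow Y \<subseteq> restrict_class C Y"
    unfolding shattered_def by blast
  also have "\<dots> \<longleftrightarrow> (\<forall>P\<subseteq>Y. \<exists>x\<in>C. x \<inter> Y = P)"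
    unfolding restrict_class_def by blast
  finally show ?thesis .
qed

lemma shattered_mono:
  assumes "A \<subseteq> B" and "shattered A Y"
  shows "shattered B Y"
  unfolding shattered_iff
proof (intro allI impI)
  fix P assume "P \<subseteq> Y"
  then obtain x where "x \<in> A" "x \<inter> Y = P"
    using assms(2) unfolding shattered_iff by blast
  then show "\<exists>x\<in>B. x \<inter> Y = P"
    using assms(1) by blast
qed

lemma shattered_cube:
  assumes "T \<inter> Y = {}"
  shows "shattered (cube T Y) Y"
  unfolding shattered_iff
proof (intro allI impI)
  fix P assume "P \<subseteq> Y"
  then have "T \<union> P \<in> cube T Y" "(T \<union> P) \<inter> Y = P"
    using assms by (auto simp: cube_def)
  then show "\<exists>x\<in>cube T Y. x \<inter> Y = P"
    by blast
qed

lemma shattered_insert_if_sections: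
  assumes sh: "\<And>v. shattered {x\<in>C. (e \<in> x) = v} Y"
  shows "shattered C (insert e Y)"
  unfolding shattered_iff
proof (intro allI impI)
  fix P assume P: "P \<subseteq> insert e Y"
  then have "P - {e} \<subseteq> Y"
    by blast
  then have "\<exists>x\<in>{x\<in>C. (e \<in> x) = (e \<in> P)}. x \<inter> Y = P - {e}"
    using sh unfolding shattered_iff by blast
  then obtain x where x: "x \<in> C" "(e \<in> x) = (e \<in> P)" "x \<inter> Y = P - {e}"
    by auto
  have "x \<inter> insert e Y = (x \<inter> Y) \<union> (if e \<in> x then {e} else {})"
    by auto
  also have "\<dots> = P"
    using P x(2,3) by auto
  finally show "\<exists>x\<in>C. x \<inter> insert e Y = P"
    using x(1) by blast
qed

lemma ampleD: "ample X C \<Longrightarrow> Y \<subseteq> X \<Longrightarrow> shattered C Y \<Longrightarrow> \<exists>T. T \<subseteq> X - Y \<and> cube T Y \<subseteq> C"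
  by (simp add: ample_def)

lemma ample_empty: "ample X {}"
  by (auto simp: ample_def shattered_def restrict_class_def)

lemma notin_if_shattered_section:
  assumes sh: "shattered {x\<in>C. (e \<in> x) = v} Y"
  shows "e \<notin> Y"
proof
  assume "e \<in> Y"
  define P where "P = (if v then {} else {e})"
  have "P \<subseteq> Y"
    using \<open>e \<in> Y\<close> by (simp add: P_def)
  then obtain x where x: "x \<in> {x\<in>C. (e \<in> x) = v}" "x \<inter> Y = P"
    using sh unfolding shattered_iff by blast
  have "e \<in> x \<longleftrightarrow> e \<in> x \<inter> Y"
    using \<open>e \<in> Y\<close> by simp
  also have "\<dots> \<longleftrightarrow> \<not> v"
    using x(2) by (simp add: P_def)
  finally show False
    using x(1) by simp
qed

lemma section_cube_if_shattered_insert: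
  assumes amp: "ample X C" and "e \<in> X" "Y \<subseteq> X" "e \<notin> Y"
    and "shattered C (insert e Y)"
  shows "\<exists>T. T \<subseteq> X - Y \<and> cube T Y \<subseteq> {x\<in>C. (e \<in> x) = v}"
proof -
  obtain T where T: "T \<subseteq> X - insert e Y" "cube T (insert e Y) \<subseteq> C"
    using ampleD[OF amp, of "insert e Y"] assms(2-5) by (auto simp del: insert_Diff_if)
  define T\<^sub>v where "T\<^sub>v = (if v then insert e T else T)"
  have "cube T\<^sub>v Y \<subseteq> cube T (insert e Y)"
    by (auto simp: mem_cube_iff T\<^sub>v_def)
  moreover have "(e \<in> x) = v" if "x \<in> cube T\<^sub>v Y" for x
    using that T(1) \<open>e \<notin> Y\<close> by (cases v) (auto simp: T\<^sub>v_def mem_cube_iff)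
  ultimately have "cube T\<^sub>v Y \<subseteq> {x\<in>C. (e \<in> x) = v}"
    using T(2) by blast
  moreover have "T\<^sub>v \<subseteq> X - Y"
    using T(1) \<open>e \<in> X\<close> \<open>e \<notin> Y\<close> by (auto simp: T\<^sub>v_def)
  ultimately show ?thesis
    by blast
qed

lemma ample_section:
  assumes amp: "ample X C" and "e \<in> X"
  shows "ample X {x\<in>C. (e \<in> x) = v}"
  unfolding ample_def
proof (intro allI impI)
  fix Y assume "Y \<subseteq> X" and sh: "shattered {x\<in>C. (e \<in> x) = v} Y"
  have "e \<notin> Y"
    using sh by (rule notin_if_shattered_section)
  have "shattered C Y"
    using shattered_mono[OF _ sh] by blast
  then obtain T where T: "T \<subseteq> X - Y" "cube T Y \<subseteq> C"
    using ampleD[OF amp \<open>Y \<subseteq> X\<close>] by blast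
  have e_cube: "(e \<in> x) = (e \<in> T)" if "x \<in> cube T Y" for x
    using that \<open>e \<notin> Y\<close> unfolding mem_cube_iff by blast
  show "\<exists>T. T \<subseteq> X - Y \<and> cube T Y \<subseteq> {x\<in>C. (e \<in> x) = v}"
  proof (cases "(e \<in> T) = v")
    case True
    then show ?thesis
      using T e_cube by blast
  next
    case False
    then have "cube T Y \<subseteq> {x\<in>C. (e \<in> x) = (\<not> v)}"
      using T(2) e_cube by auto
    moreover have "shattered (cube T Y) Y"
      using T(1) by (intro shattered_cube) blast
    ultimately have "shattered {x\<in>C. (e \<in> x) = (\<not> v)} Y"
      by (rule shattered_mono)
    then have "shattered {x\<in>C. (e \<in> x) = v'} Y" for v'
      using sh by (cases v; cases v') simp_all
    then have "shattered C (insert e Y)"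
      by (rule shattered_insert_if_sections)
    then show ?thesis
      using section_cube_if_shattered_insert[OF amp \<open>e \<in> X\<close> \<open>Y \<subseteq> X\<close> \<open>e \<notin> Y\<close>] by blast
  qed
qed

lemma ample_sections:
  assumes "ample X C" and "finite K" and "K \<subseteq> X"
  shows "ample X {x\<in>C. \<forall>e\<in>K. (e \<in> x) = (e \<in> c)}"
  using assms(2,3)
proof (induction K rule: finite_induct)
  case empty
  then show ?case
    using assms(1) by simp
next
  case (insert k K)
  have eq: "{x\<in>C. \<forall>e\<in>insert k K. (e \<in> x) = (e \<in> c)}
      = {x\<in>{x\<in>C. \<forall>e\<in>K. (e \<in> x) = (e \<in> c)}. (k \<in> x) = (k \<in> c)}"
    by auto
  show ?case
    unfolding eq using insert by (intro ample_section) simp_all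
qed

lemma ample_face:
  assumes "ample X C" "finite X" "C \<subseteq> Pow X" "c \<subseteq> X"
  shows "ample X (C \<inter> cube (c - R) R)"
proof -
  have "symdiff c x \<subseteq> R \<longleftrightarrow> (\<forall>e\<in>X - R. (e \<in> x) = (e \<in> c))" if "x \<in> C" for x
    using that assms(3,4) by (auto simp: symdiff_def)
  then have "C \<inter> cube (c - R) R = {x\<in>C. \<forall>e\<in>X - R. (e \<in> x) = (e \<in> c)}"
    by (auto simp: mem_cube_Diff_iff)
  then show ?thesis
    using ample_sections[OF assms(1), of "X - R" c] assms(2) by simp
qed

lemma shattered_cube_minus_antipodes:
  assumes "e \<in> R" and "R \<noteq> {e}"
  shows "shattered (cube (c - R) R - {c, symdiff c R}) (R - {e})"
  unfolding shattered_iff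
proof (intro allI impI)
  fix P assume "P \<subseteq> R - {e}"
  define x where "x = (c - R) \<union> P"
  have cube: "x \<in> cube (c - R) R" "insert e x \<in> cube (c - R) R"
    using \<open>P \<subseteq> R - {e}\<close> \<open>e \<in> R\<close> by (auto simp: mem_cube_iff x_def)
  have trace: "x \<inter> (R - {e}) = P" "insert e x \<inter> (R - {e}) = P"
    using \<open>P \<subseteq> R - {e}\<close> by (auto simp: x_def)
  have "e \<notin> x"
    using \<open>P \<subseteq> R - {e}\<close> \<open>e \<in> R\<close> by (auto simp: x_def)
  have "\<not> (x \<in> {c, symdiff c R} \<and> insert e x \<in> {c, symdiff c R})"
  proof
    assume "x \<in> {c, symdiff c R} \<and> insert e x \<in> {c, symdiff c R}"
    then have "symdiff x (insert e x) = R"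
      using \<open>e \<notin> x\<close> by (auto simp: symdiff_commute[of _ c])
    moreover have "symdiff x (insert e x) = {e}"
      using \<open>e \<notin> x\<close> by (auto simp: symdiff_def)
    ultimately show False
      using assms(2) by simp
  qed
  then show "\<exists>x\<in>cube (c - R) R - {c, symdiff c R}. x \<inter> (R - {e}) = P"
    using cube trace by blast
qed

lemma antipode_in_facet:
  assumes "e \<in> R" and "T \<in> cube (c - R) R" and "T \<inter> (R - {e}) = {}"
  shows "c \<in> cube T (R - {e}) \<or> symdiff c R \<in> cube T (R - {e})"
proof -
  have "c - R \<subseteq> T" "T \<subseteq> (c - R) \<union> {e}"
    using assms(2,3) by (auto simp: mem_cube_iff)
  then show ?thesis
    using \<open>e \<in> R\<close> unfolding mem_cube_iff
    by (cases "e \<in> T"; cases "e \<in> c") (auto simp: symdiff_def)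
qed

lemma not_ample_cube_minus_antipodes:
  assumes "R \<subseteq> X" and "2 \<le> card R"
  shows "\<not> ample X (cube (c - R) R - {c, symdiff c R})"
proof
  assume amp: "ample X (cube (c - R) R - {c, symdiff c R})"
  obtain e where "e \<in> R"
    using assms(2) by fastforce
  moreover have "R \<noteq> {e}"
    using assms(2) by auto
  ultimately have sh: "shattered (cube (c - R) R - {c, symdiff c R}) (R - {e})"
    by (rule shattered_cube_minus_antipodes)
  have "R - {e} \<subseteq> X"
    using assms(1) by blast
  then obtain T where
    T: "T \<subseteq> X - (R - {e})" "cube T (R - {e}) \<subseteq> cube (c - R) R - {c, symdiff c R}"
    using ampleD[OF amp _ sh] by blast
  have "T \<in> cube T (R - {e})"
    by (simp add: mem_cube_iff)
  then have "T \<in> cube (c - R) R"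
    using T(2) by blast
  then have "c \<in> cube T (R - {e}) \<or> symdiff c R \<in> cube T (R - {e})"
    using antipode_in_facet[OF \<open>e \<in> R\<close>] T(1) by blast
  then show False
    using T(2) by blast
qed

text \<open>Otherwise the face of \<open>D\<close> spanned by \<open>R\<close> at \<open>c\<close> would be a cube minus two antipodes,
  while faces of ample classes are ample.\<close>
lemma antipode_in_ample:
  assumes "finite X" "D \<subseteq> Pow X" "ample X D" "c \<subseteq> X" "c \<notin> D" "R \<subseteq> X" "2 \<le> card R"
    and face: "\<And>y. symdiff c y \<subset> R \<Longrightarrow> y \<in> insert c D"
  shows "symdiff c R \<in> D"
proof (rule ccontr)
  assume "symdiff c R \<notin> D"
  have "D \<inter> cube (c - R) R = cube (c - R) R - {c, symdiff c R}"
  proof (intro equalityI subsetI)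
    fix y assume "y \<in> D \<inter> cube (c - R) R"
    then show "y \<in> cube (c - R) R - {c, symdiff c R}"
      using \<open>c \<notin> D\<close> \<open>symdiff c R \<notin> D\<close> by auto
  next
    fix y assume y: "y \<in> cube (c - R) R - {c, symdiff c R}"
    then have "symdiff c y \<subset> R"
      by (auto simp: mem_cube_Diff_iff symdiff_eq_iff)
    then show "y \<in> D \<inter> cube (c - R) R"
      using face y by blast
  qed
  moreover have "ample X (D \<inter> cube (c - R) R)"
    by (rule ample_face[OF assms(3,1,2,4)])
  ultimately show False
    using not_ample_cube_minus_antipodes[OF assms(6,7)] by simp
qed

lemma cube_Diff_subset_insert_if_ample:
  assumes "finite X" "D \<subseteq> Pow X" "ample X D" "c \<subseteq> X" "c \<notin> D" "S \<subseteq> X"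
    and flips: "\<And>e. e \<in> S \<Longrightarrow> symdiff c {e} \<in> D"
  shows "cube (c - S) S \<subseteq> insert c D"
proof -
  have "x \<in> insert c D" if "symdiff c x \<subseteq> S" for x
    using that
  proof (induction "card (symdiff c x)" arbitrary: x rule: less_induct)
    case less
    define R where "R = symdiff c x"
    have "R \<subseteq> X" "finite R"
      using less.prems assms(1,6) by (auto simp: R_def intro: finite_subset)
    have x_eq: "x = symdiff c R"
      by (simp add: R_def symdiff_eq_iff)
    consider "R = {}" | e where "R = {e}" | "2 \<le> card R"
      using \<open>finite R\<close> by (metis One_nat_def card_1_singletonE card_0_eq less_2_cases not_less)
    then show ?case
    proof cases
      case 1
      then show ?thesis
        using x_eq by simp
    next
      case 2
      then have "e \<in> S"
        using less.prems unfolding R_def by blast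
      then show ?thesis
        using x_eq 2 flips by simp
    next
      case 3
      have "y \<in> insert c D" if "symdiff c y \<subset> R" for y
        using less.hyps[of y] psubset_card_mono[OF \<open>finite R\<close> that] that less.prems
        by (auto simp: R_def)
      then have "symdiff c R \<in> D"
        by (rule antipode_in_ample[OF assms(1-5) \<open>R \<subseteq> X\<close> 3])
      then show ?thesis
        using x_eq by simp
    qed
  qed
  then show ?thesis
    unfolding subset_iff mem_cube_Diff_iff by blast
qed

lemma corner_insert_if_ample:
  assumes "finite X" "D \<subseteq> Pow X" "ample X D" "c \<subseteq> X" "c \<notin> D"
  shows "corner X (insert c D) c"
proof -
  define S where "S = {e\<in>X. symdiff c {e} \<in> D}"
  show ?thesis
  proof (rule corner_if_greatest_cube)
    show "is_cube X (cube (c - S) S)"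
      using assms(4) by (intro is_cube_cube_Diff) (auto simp: S_def)
    show "cube (c - S) S \<subseteq> insert c D"
      using assms by (intro cube_Diff_subset_insert_if_ample) (auto simp: S_def)
    show "c \<in> cube (c - S) S"
      by (simp add: mem_cube_Diff_iff)
  next
    fix B assume B: "is_cube X B" "B \<subseteq> insert c D" "c \<in> B"
    then obtain Y where "Y \<subseteq> X" and B_eq: "B = cube (c - Y) Y"
      using cube_Diff_if_is_cube[OF B(1,3)] by blast
    have "symdiff c {y} \<in> D" if "y \<in> Y" for y
    proof -
      have "symdiff c {y} \<in> B"
        using that by (simp add: B_eq mem_cube_Diff_iff)
      moreover have "symdiff c {y} \<noteq> c"
        by (simp add: symdiff_eq_iff)
      ultimately show ?thesis
        using B(2) by blast
    qed
    then have "Y \<subseteq> S"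
      using \<open>Y \<subseteq> X\<close> by (auto simp: S_def)
    then show "B \<subseteq> cube (c - S) S"
      by (auto simp: B_eq mem_cube_Diff_iff)
  qed
qed

lemma shattered_insert_twin:
  assumes "shattered (insert c D) Y" and "d \<in> D" and "d \<inter> Y = c \<inter> Y"
  shows "shattered D Y"
  unfolding shattered_iff
proof (intro allI impI)
  fix P assume "P \<subseteq> Y"
  then obtain x where "x \<in> insert c D" "x \<inter> Y = P"
    using assms(1) unfolding shattered_iff by blast
  then show "\<exists>x\<in>D. x \<inter> Y = P"
    using assms(2,3) by auto
qed

text \<open>Flipping \<open>y\<close> in the trace of \<open>c\<close> on \<open>Y\<close> gives a trace realised by some \<open>d \<in> D\<close>. The
  first step of a geodesic from \<open>c\<close> to \<open>d\<close> flips a coordinate in which \<open>c\<close> and \<open>d\<close> differ;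
  outside \<open>Y\<close> it would produce a twin of \<open>c\<close> on \<open>Y\<close>, so it flips \<open>y\<close>.\<close>
lemma flip_in_if_shattered_insert:
  assumes iso: "isometric (insert c D)"
    and sh: "shattered (insert c D) Y" and not_sh: "\<not> shattered D Y" and "y \<in> Y"
  shows "symdiff c {y} \<in> D"
proof -
  define P where "P = symdiff (c \<inter> Y) {y}"
  have "P \<subseteq> Y"
    using \<open>y \<in> Y\<close> by (auto simp: P_def symdiff_def)
  then obtain d where d: "d \<in> insert c D" "d \<inter> Y = P"
    using sh unfolding shattered_iff by blast
  have "d \<noteq> c"
  proof
    assume "d = c"
    then have "symdiff (c \<inter> Y) (c \<inter> Y) = {y}"
      using d(2) symdiff_eq_iff[of "c \<inter> Y" "c \<inter> Y" "{y}"] by (simp add: P_def)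
    then show False
      by simp
  qed
  then obtain z where z: "z \<in> insert c D" "hdist c z = 1" "Suc (hdist z d) = hdist c d"
    using iso d(1) unfolding isometric_iff_steps_towards by blast
  then obtain e where e: "z = symdiff c {e}"
    unfolding hdist_eq_1_iff by blast
  have "z \<noteq> c"
    using z(2) by auto
  then have "z \<in> D"
    using z(1) by simp
  have "e \<in> symdiff c d"
    using z(3) e by (intro mem_symdiff_if_flip_closer) simp
  have "e \<in> Y"
  proof (rule ccontr)
    assume "e \<notin> Y"
    then have "z \<inter> Y = c \<inter> Y"
      using e by (auto simp: symdiff_def)
    then show False
      using shattered_insert_twin[OF sh \<open>z \<in> D\<close>] not_sh by blast
  qed
  have "symdiff c d \<inter> Y = symdiff (c \<inter> Y) (d \<inter> Y)"
    by (auto simp: symdiff_def)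
  also have "\<dots> = {y}"
    using d(2) by (simp add: P_def)
  finally have "e = y"
    using \<open>e \<in> symdiff c d\<close> \<open>e \<in> Y\<close> by blast
  then show ?thesis
    using \<open>z \<in> D\<close> e by simp
qed

lemma ample_insert_if_isometric:
  assumes "finite X" "insert c D \<subseteq> Pow X" "ample X D" "c \<notin> D" "isometric (insert c D)"
  shows "ample X (insert c D)"
  unfolding ample_def
proof (intro allI impI)
  fix Y assume "Y \<subseteq> X" and sh: "shattered (insert c D) Y"
  show "\<exists>T. T \<subseteq> X - Y \<and> cube T Y \<subseteq> insert c D"
  proof (cases "shattered D Y")
    case True
    then obtain T where "T \<subseteq> X - Y" "cube T Y \<subseteq> D"
      using ampleD[OF assms(3) \<open>Y \<subseteq> X\<close>] by blast
    then show ?thesis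
      by blast
  next
    case False
    then have "cube (c - Y) Y \<subseteq> insert c D"
      using assms \<open>Y \<subseteq> X\<close> flip_in_if_shattered_insert[OF assms(5) sh False]
      by (intro cube_Diff_subset_insert_if_ample) auto
    moreover have "c - Y \<subseteq> X - Y"
      using assms(2) by auto
    ultimately show ?thesis
      by blast
  qed
qed

section \<open>Orderings of a class\<close>

lemma set_take_Suc_nth: "i < length cs \<Longrightarrow> set (take (Suc i) cs) = insert (cs ! i) (set (take i cs))"
  by (simp add: take_Suc_conv_app_nth)

lemma nth_notin_set_take: "distinct cs \<Longrightarrow> i < length cs \<Longrightarrow> cs ! i \<notin> set (take i cs)"
  using distinct_take[of cs "Suc i"] by (simp add: take_Suc_conv_app_nth)

lemma set_take_eq_Diff:
  "distinct cs \<Longrightarrow> i < length cs \<Longrightarrow> set (take i cs) = set (take (Suc i) cs) - {cs ! i}"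
  using nth_notin_set_take[of cs i] by (simp add: set_take_Suc_nth)

lemma prefixes_downward_induct:
  assumes "i \<le> length cs" and "P (set cs)"
    and step: "\<And>j. j < length cs \<Longrightarrow> P (set (take (Suc j) cs)) \<Longrightarrow> P (set (take j cs))"
  shows "P (set (take i cs))"
  using assms(1)
proof (induction "length cs - i" arbitrary: i)
  case 0
  then show ?case
    using assms(2) by simp
next
  case (Suc n)
  then show ?case
    using step[of i] by simp
qed

lemma ball_prefixes_iff:
  "P {} \<Longrightarrow> (\<forall>i\<in>{1..length cs}. P (set (take i cs))) \<longleftrightarrow> (\<forall>i\<le>length cs. P (set (take i cs)))"
  by (metis atLeastAtMost_iff bot_nat_0.extremum less_one not_le take_0 list.set(1))

lemma ball_atLeastAtMost_1_iff: "(\<forall>i\<in>{1..n}. P i) \<longleftrightarrow> (\<forall>i<n. P (Suc i))"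
  unfolding image_Suc_lessThan[symmetric] by auto

lemma corners_if_ample_prefixes:
  assumes "finite X" "set cs \<subseteq> Pow X" "distinct cs"
    and ample: "\<forall>i\<le>length cs. ample X (set (take i cs))"
  shows "\<forall>i<length cs. corner X (set (take (Suc i) cs)) (cs ! i)"
proof (intro allI impI)
  fix i assume "i < length cs"
  have "set (take i cs) \<subseteq> Pow X" "cs ! i \<subseteq> X"
    using assms(2) set_take_subset[of i cs] nth_mem[OF \<open>i < length cs\<close>] by auto
  then show "corner X (set (take (Suc i) cs)) (cs ! i)"
    using assms(1,3) ample \<open>i < length cs\<close>
    by (simp add: set_take_Suc_nth nth_notin_set_take corner_insert_if_ample)
qed

lemma isometric_prefixes_if_corners:
  assumes "finite X" "set cs \<subseteq> Pow X" "distinct cs" "isometric (set cs)"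
    and corners: "\<forall>i<length cs. corner X (set (take (Suc i) cs)) (cs ! i)"
  shows "\<forall>i\<le>length cs. isometric (set (take i cs))"
proof (intro allI impI)
  fix i assume "i \<le> length cs"
  then show "isometric (set (take i cs))"
  proof (rule prefixes_downward_induct)
    fix j assume "j < length cs" and iso: "isometric (set (take (Suc j) cs))"
    have "set (take (Suc j) cs) \<subseteq> Pow X"
      using assms(2) set_take_subset[of "Suc j" cs] by blast
    then have "isometric (set (take (Suc j) cs) - {cs ! j})"
      using isometric_Diff_corner[OF _ _ iso] corners \<open>j < length cs\<close> by simp
    then show "isometric (set (take j cs))"
      using assms(3) \<open>j < length cs\<close> by (simp add: set_take_eq_Diff)
  qed (rule assms(4))
qed

lemma ample_prefixes_if_isometric:
  assumes "finite X" "set cs \<subseteq> Pow X" "distinct cs"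
    and iso: "\<forall>i\<le>length cs. isometric (set (take i cs))"
  shows "\<forall>i\<le>length cs. ample X (set (take i cs))"
proof (intro allI impI)
  fix i assume "i \<le> length cs"
  then show "ample X (set (take i cs))"
  proof (induction i)
    case 0
    then show ?case
      by (simp add: ample_empty)
  next
    case (Suc i)
    have "set (take (Suc i) cs) \<subseteq> Pow X"
      using assms(2) set_take_subset[of "Suc i" cs] by blast
    moreover have "isometric (set (take (Suc i) cs))"
      using iso Suc.prems by blast
    ultimately show ?case
      using ample_insert_if_isometric[OF assms(1)] Suc assms(3)
      by (simp add: set_take_Suc_nth nth_notin_set_take)
  qed
qed

lemma isometric_prefixes_if_weakly_isometric:
  assumes "distinct cs" "isometric (set cs)"
    and weak: "\<forall>i\<le>length cs. weakly_isometric (set (take i cs))"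
  shows "\<forall>i\<le>length cs. isometric (set (take i cs))"
proof (intro allI impI)
  fix i assume "i \<le> length cs"
  then show "isometric (set (take i cs))"
  proof (rule prefixes_downward_induct)
    fix j assume "j < length cs" and iso: "isometric (set (take (Suc j) cs))"
    have "weakly_isometric (set (take j cs))"
      using weak \<open>j < length cs\<close> by simp
    then have "weakly_isometric (set (take (Suc j) cs) - {cs ! j})"
      using assms(1) \<open>j < length cs\<close> by (simp add: set_take_eq_Diff)
    with iso have "isometric (set (take (Suc j) cs) - {cs ! j})"
      by (rule isometric_Diff_singleton_if_weakly_isometric)
    then show "isometric (set (take j cs))"
      using assms(1) \<open>j < length cs\<close> by (simp add: set_take_eq_Diff)
  qed (rule assms(2))
qed

theorem proposition4p1:
  fixes X :: "'a set" and C :: "'a set set" and cs :: "'a set list"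
  assumes "finite X" and "C \<subseteq> Pow X" and "isometric C"
    and "distinct cs" and "set cs = C"
  shows "((\<forall>i\<in>{1..length cs}. ample X (set (take i cs)))
            \<longleftrightarrow> (\<forall>i\<in>{1..length cs}. corner X (set (take i cs)) (cs ! (i - 1))))
       \<and> ((\<forall>i\<in>{1..length cs}. ample X (set (take i cs)))
            \<longleftrightarrow> (\<forall>i\<in>{1..length cs}. isometric (set (take i cs))))
       \<and> ((\<forall>i\<in>{1..length cs}. ample X (set (take i cs)))
            \<longleftrightarrow> (\<forall>i\<in>{1..length cs}. weakly_isometric (set (take i cs))))"
proof -
  note prefixes = assms(1) assms(2)[folded assms(5)] assms(4)
  note iso = assms(3)[folded assms(5)]
  have corners_iff: "(\<forall>i\<in>{1..length cs}. corner X (set (take i cs)) (cs ! (i - 1)))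
      \<longleftrightarrow> (\<forall>i<length cs. corner X (set (take (Suc i) cs)) (cs ! i))"
    unfolding ball_atLeastAtMost_1_iff by simp
  have "(\<forall>i\<le>length cs. ample X (set (take i cs)))
      \<longleftrightarrow> (\<forall>i<length cs. corner X (set (take (Suc i) cs)) (cs ! i))"
    using corners_if_ample_prefixes[OF prefixes] isometric_prefixes_if_corners[OF prefixes iso]
      ample_prefixes_if_isometric[OF prefixes] by blast
  moreover have "(\<forall>i\<le>length cs. ample X (set (take i cs)))
      \<longleftrightarrow> (\<forall>i\<le>length cs. isometric (set (take i cs)))"
    using ample_prefixes_if_isometric[OF prefixes] corners_if_ample_prefixes[OF prefixes]
      isometric_prefixes_if_corners[OF prefixes iso] by blast
  moreover have "(\<forall>i\<le>length cs. isometric (set (take i cs)))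
      \<longleftrightarrow> (\<forall>i\<le>length cs. weakly_isometric (set (take i cs)))"
    using isometric_prefixes_if_weakly_isometric[OF assms(4) iso] weakly_isometric_if_isometric
    by blast
  ultimately show ?thesis
    unfolding corners_iff ball_prefixes_iff[of "ample X", OF ample_empty]
      ball_prefixes_iff[of isometric, OF isometric_empty]
      ball_prefixes_iff[of weakly_isometric, OF weakly_isometric_if_isometric[OF isometric_empty]]
    by blast
qed

end
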